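(* Let $D\ge 1$. The underlying block design $\mathcal{F}$ of any $(T,N,D)$-tropical code is $(D-1)$-uniquely-disjunct.
   Context: Tropical arithmetic on $\mathbb{R}\cup\{\infty\}$: $x\oplus y=\min(x,y)$, $x\odot y=x+y$, with $x\oplus\infty=x$ and $x\odot\infty=\infty$. For a matrix $S$ with $T$ rows and $N$ columns and a column vector $\mathbf{x}$ of length $N$, $S\odot\mathbf{x}$ is the vector whose $t$-th entry is $\min_{j}(S_{tj}+x_j)$. A $(T,N,D)$-tropical code is a matrix $S\in(\{0\}\cup\mathbb{N}\cup\{\infty\})^{T\times N}$ such that for any two distinct vectors $\mathbf{x},\mathbf{y}\in(\{0\}\cup\mathbb{N}\cup\{\infty\})^{N}$, each having at most $D$ finite entries, $S\odot\mathbf{x}\ne S\odot\mathbf{y}$. The underlying block design of $S$ is the multiset $\mathcal{F}=\{\{t\in[T]: S_{tj}<\infty\}: j\in[N]\}$ (one block per column, so $|\mathcal{F}|=N$); "distinct blocks" means blocks coming from distinct columns (they may coincide as sets). $\mathcal{F}$ is $m$-disjunct if $|Z\setminus(B_1\cup\dots\cup B_m)|\ge 1$ for all distinct blocks $Z,B_1,\dots,B_m\in\mathcal{F}$. $\mathcal{F}$ is $m$-uniquely-disjunct if it is $m$-disjunct and, for every $t\in[T]$ and all distinct blocks $B_1,\dots,B_m\in\mathcal{F}$, at most one block $Z\in\mathcal{F}$ (other than the $B_i$, counted by column) satisfies $Z\setminus(B_1\cup\dots\cup B_m)=\{t\}$. *)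

theory Defs
  imports Main "HOL-Library.Extended_Nat"
begin

text \<open>Entries in {0} \<union> \<nat> \<union> {\<infinity>} are modelled by enat.
A T x N matrix is a function S :: nat \<Rightarrow> nat \<Rightarrow> enat, only entries t < T, j < N matter;
a vector of length N is x :: nat \<Rightarrow> enat, only entries j < N matter.\<close>

definition trop_mv :: "(nat \<Rightarrow> nat \<Rightarrow> enat) \<Rightarrow> nat \<Rightarrow> (nat \<Rightarrow> enat) \<Rightarrow> nat \<Rightarrow> enat" where
  "trop_mv S N x t = (INF j\<in>{..<N}. S t j + x j)"

definition num_finite :: "nat \<Rightarrow> (nat \<Rightarrow> enat) \<Rightarrow> nat" where
  "num_finite N x = card {j. j < N \<and> x j \<noteq> \<infinity>}"

definition tropical_code :: "nat \<Rightarrow> nat \<Rightarrow> nat \<Rightarrow> (nat \<Rightarrow> nat \<Rightarrow> enat) \<Rightarrow> bool" where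
  "tropical_code T N D S \<longleftrightarrow>
     (\<forall>x y. num_finite N x \<le> D \<longrightarrow> num_finite N y \<le> D \<longrightarrow> (\<exists>j<N. x j \<noteq> y j) \<longrightarrow>
        (\<exists>t<T. trop_mv S N x t \<noteq> trop_mv S N y t))"

definition block :: "nat \<Rightarrow> (nat \<Rightarrow> nat \<Rightarrow> enat) \<Rightarrow> nat \<Rightarrow> nat set" where
  "block T S j = {t. t < T \<and> S t j < \<infinity>}"

text \<open>Distinct blocks Z, B_1..B_m are given by a column z and a set I of m columns not containing z.\<close>
definition disjunct :: "nat \<Rightarrow> nat \<Rightarrow> (nat \<Rightarrow> nat \<Rightarrow> enat) \<Rightarrow> nat \<Rightarrow> bool" where
  "disjunct T N S m \<longleftrightarrow>
     (\<forall>I z. I \<subseteq> {..<N} \<longrightarrow> card I = m \<longrightarrow> z < N \<longrightarrow> z \<notin> I \<longrightarrow>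
        card (block T S z - (\<Union>i\<in>I. block T S i)) \<ge> 1)"

definition uniquely_disjunct :: "nat \<Rightarrow> nat \<Rightarrow> (nat \<Rightarrow> nat \<Rightarrow> enat) \<Rightarrow> nat \<Rightarrow> bool" where
  "uniquely_disjunct T N S m \<longleftrightarrow> disjunct T N S m \<and>
     (\<forall>t<T. \<forall>I. I \<subseteq> {..<N} \<longrightarrow> card I = m \<longrightarrow>
        (\<forall>z1 z2. z1 < N \<longrightarrow> z2 < N \<longrightarrow> z1 \<notin> I \<longrightarrow> z2 \<notin> I \<longrightarrow>
           block T S z1 - (\<Union>i\<in>I. block T S i) = {t} \<longrightarrow>
           block T S z2 - (\<Union>i\<in>I. block T S i) = {t} \<longrightarrow> z1 = z2))"

end

theory Submission
  imports Defs
begin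

text \<open>Take columns \<open>I\<close> with \<open>|I| = D - 1\<close>, a further column \<open>z\<close>, and probe \<open>S\<close> with the
  vector that is \<open>0\<close> on \<open>I\<close>, \<open>v\<close> at \<open>z\<close> and \<open>\<infinity>\<close> elsewhere. In row \<open>t\<close> the product is
  \<open>min (INF i\<in>I. S t i) (S t z + v)\<close>; let \<open>M\<close> bound all finite entries of \<open>S\<close> in the columns
  \<open>I\<close>. For \<open>v \<ge> M\<close> the second term is irrelevant in every row meeting a block of \<open>I\<close>, and in
  every row outside the block of \<open>z\<close>. So if the block of \<open>z\<close> were covered by the blocks of \<open>I\<close>,
  the choices \<open>v = \<infinity>\<close> and \<open>v = M\<close> would give distinct vectors with equal products. If two
  columns \<open>z\<^sub>1 \<noteq> z\<^sub>2\<close> had the same private row \<open>t\<close>, then putting \<open>M + S t z\<^sub>2\<close> at \<open>z\<^sub>1\<close>,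
  resp. \<open>M + S t z\<^sub>1\<close> at \<open>z\<^sub>2\<close>, gives distinct vectors whose products agree in row \<open>t\<close>, where
  both equal \<open>S t z\<^sub>1 + S t z\<^sub>2 + M\<close>, and elsewhere by absorption.\<close>

lemma INF_if_top_eq:
  fixes f :: "'a \<Rightarrow> 'b::complete_lattice"
  assumes "I \<subseteq> A"
  shows "(INF j\<in>A. if j \<in> I then f j else top) = (INF j\<in>I. f j)"
proof (rule antisym)
  show "(INF j\<in>A. if j \<in> I then f j else top) \<le> (INF j\<in>I. f j)"
  proof (rule INF_greatest)
    fix i assume "i \<in> I"
    with assms show "(INF j\<in>A. if j \<in> I then f j else top) \<le> f i"
      by (intro INF_lower2[of i]) auto
  qed
  show "(INF j\<in>I. f j) \<le> (INF j\<in>A. if j \<in> I then f j else top)"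
    by (intro INF_greatest) (simp add: INF_lower)
qed

definition probe :: "nat set \<Rightarrow> nat \<Rightarrow> enat \<Rightarrow> nat \<Rightarrow> enat" where
  "probe I z v = (\<lambda>j. if j \<in> I then 0 else \<infinity>)(z := v)"

lemma num_finite_probe:
  assumes "I \<subseteq> {..<N}" "z < N" "z \<notin> I" "v \<noteq> \<infinity>"
  shows "num_finite N (probe I z v) = card I + 1"
proof -
  have "{j. j < N \<and> probe I z v j \<noteq> \<infinity>} = insert z I"
    using assms by (auto simp: probe_def zero_enat_def)
  then show ?thesis
    using assms by (simp add: num_finite_def finite_subset)
qed

lemma num_finite_probe_infinity:
  assumes "I \<subseteq> {..<N}" "z \<notin> I"
  shows "num_finite N (probe I z \<infinity>) = card I"
proof -
  have "{j. j < N \<and> probe I z \<infinity> j \<noteq> \<infinity>} = I"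
    using assms by (auto simp: probe_def zero_enat_def)
  then show ?thesis
    by (simp add: num_finite_def)
qed

lemma trop_mv_probe:
  assumes "I \<subseteq> {..<N}" "z < N" "z \<notin> I"
  shows "trop_mv S N (probe I z v) t = min (INF i\<in>I. S t i) (S t z + v)"
proof -
  let ?f = "\<lambda>j. S t j + probe I z v j"
  have I_sub: "I \<subseteq> {..<N} - {z}"
    using assms by auto
  have "trop_mv S N (probe I z v) t = (INF j\<in>insert z ({..<N} - {z}). ?f j)"
    unfolding trop_mv_def by (rule arg_cong[where f = "\<lambda>A. INF j\<in>A. ?f j"]) (use assms in auto)
  also have "\<dots> = min (?f z) (INF j\<in>{..<N} - {z}. ?f j)"
    by (simp only: INF_insert inf_min)
  also have "(INF j\<in>{..<N} - {z}. ?f j) = (INF j\<in>{..<N} - {z}. if j \<in> I then S t j else \<infinity>)"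
    by (rule INF_cong) (auto simp: probe_def)
  also have "\<dots> = (INF i\<in>I. S t i)"
    using INF_if_top_eq[OF I_sub, where f = "S t"] by (simp only: top_enat_def)
  finally have "trop_mv S N (probe I z v) t = min (S t z + probe I z v z) (INF i\<in>I. S t i)" .
  moreover have "probe I z v z = v"
    by (simp add: probe_def)
  ultimately show ?thesis
    by (simp only: min.commute)
qed

lemma finite_enat_set_bounded:
  fixes A :: "enat set"
  assumes "finite A"
  shows "\<exists>M. \<forall>a\<in>A. a \<noteq> \<infinity> \<longrightarrow> a \<le> enat M"
proof (intro exI ballI impI)
  fix a assume "a \<in> A" "a \<noteq> \<infinity>"
  then have "the_enat a \<le> Max (the_enat ` A)"
    using assms by simp
  with \<open>a \<noteq> \<infinity>\<close> show "a \<le> enat (Max (the_enat ` A))"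
    by (cases a) auto
qed

lemma finite_columns_bounded:
  fixes S :: "nat \<Rightarrow> nat \<Rightarrow> enat"
  assumes "finite I"
  obtains M where "\<forall>t<T. \<forall>i\<in>I. S t i \<noteq> \<infinity> \<longrightarrow> S t i \<le> enat M"
  using finite_enat_set_bounded[of "case_prod S ` ({..<T} \<times> I)"] assms by auto

lemma trop_mv_probe_eq_INF:
  assumes "I \<subseteq> {..<N}" "z < N" "z \<notin> I" "t < T"
    and "t \<notin> block T S z - (\<Union>i\<in>I. block T S i)"
    and bound: "\<forall>i\<in>I. S t i \<noteq> \<infinity> \<longrightarrow> S t i \<le> enat M" and "enat M \<le> v"
  shows "trop_mv S N (probe I z v) t = (INF i\<in>I. S t i)"
proof -
  have "(INF i\<in>I. S t i) \<le> S t z + v"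
  proof (cases "S t z = \<infinity>")
    case False
    with assms obtain i where "i \<in> I" "S t i \<noteq> \<infinity>"
      by (auto simp: block_def)
    then have "(INF i\<in>I. S t i) \<le> enat M"
      using bound by (meson INF_lower order_trans)
    also have "\<dots> \<le> S t z + v"
      using \<open>enat M \<le> v\<close> by (metis add.commute order_trans le_iff_add)
    finally show ?thesis .
  qed simp
  then show ?thesis
    using assms by (simp add: trop_mv_probe min_absorb1)
qed

lemma tropical_codeD:
  assumes "tropical_code T N D S" "num_finite N x \<le> D" "num_finite N y \<le> D" "j < N" "x j \<noteq> y j"
  obtains t where "t < T" "trop_mv S N x t \<noteq> trop_mv S N y t"
  using assms unfolding tropical_code_def by blast

lemma tropical_code_disjunct:
  assumes "D \<ge> 1" and code: "tropical_code T N D S"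
  shows "disjunct T N S (D - 1)"
  unfolding disjunct_def
proof (intro allI impI)
  fix I z assume I: "I \<subseteq> {..<N}" "card I = D - 1" "z < N" "z \<notin> I"
  have "finite I"
    using I(1) finite_nat_iff_bounded by blast
  then obtain M where M: "\<forall>t<T. \<forall>i\<in>I. S t i \<noteq> \<infinity> \<longrightarrow> S t i \<le> enat M"
    by (rule finite_columns_bounded)
  show "1 \<le> card (block T S z - (\<Union>i\<in>I. block T S i))"
  proof (rule ccontr)
    assume "\<not> ?thesis"
    then have "card (block T S z - (\<Union>i\<in>I. block T S i)) = 0"
      by simp
    moreover have "finite (block T S z)"
      by (simp add: block_def)
    ultimately have covered: "block T S z - (\<Union>i\<in>I. block T S i) = {}"
      by simp
    have "num_finite N (probe I z \<infinity>) \<le> D" "num_finite N (probe I z (enat M)) \<le> D"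
      using I \<open>D \<ge> 1\<close> by (simp_all add: num_finite_probe num_finite_probe_infinity)
    moreover have "probe I z \<infinity> z \<noteq> probe I z (enat M) z"
      by (simp add: probe_def)
    ultimately obtain t where t: "t < T"
      and differ: "trop_mv S N (probe I z \<infinity>) t \<noteq> trop_mv S N (probe I z (enat M)) t"
      using tropical_codeD[OF code _ _ \<open>z < N\<close>] by blast
    have bound: "\<forall>i\<in>I. S t i \<noteq> \<infinity> \<longrightarrow> S t i \<le> enat M"
      using M t by blast
    have "trop_mv S N (probe I z v) t = (INF i\<in>I. S t i)" if "enat M \<le> v" for v
      using trop_mv_probe_eq_INF[where S = S and T = T, OF I(1,3,4) t _ bound that] covered by blast
    with differ show False
      by simp
  qed
qed

lemma tropical_code_private_row_unique:
  assumes "D \<ge> 1" and code: "tropical_code T N D S" and "t < T"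
    and I: "I \<subseteq> {..<N}" "card I = D - 1"
    and z: "z\<^sub>1 < N" "z\<^sub>2 < N" "z\<^sub>1 \<notin> I" "z\<^sub>2 \<notin> I"
    and private1: "block T S z\<^sub>1 - (\<Union>i\<in>I. block T S i) = {t}"
    and private2: "block T S z\<^sub>2 - (\<Union>i\<in>I. block T S i) = {t}"
  shows "z\<^sub>1 = z\<^sub>2"
proof (rule ccontr)
  assume "z\<^sub>1 \<noteq> z\<^sub>2"
  have "finite I"
    using I(1) finite_nat_iff_bounded by blast
  then obtain M where M: "\<forall>t<T. \<forall>i\<in>I. S t i \<noteq> \<infinity> \<longrightarrow> S t i \<le> enat M"
    by (rule finite_columns_bounded)
  have "t \<in> block T S z\<^sub>1" "t \<in> block T S z\<^sub>2"
    using private1 private2 by blast+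
  then have finite_z: "S t z\<^sub>1 \<noteq> \<infinity>" "S t z\<^sub>2 \<noteq> \<infinity>"
    by (simp_all add: block_def)
  define x where "x = probe I z\<^sub>1 (enat M + S t z\<^sub>2)"
  define y where "y = probe I z\<^sub>2 (enat M + S t z\<^sub>1)"
  have "num_finite N x \<le> D" "num_finite N y \<le> D"
    using I z finite_z \<open>D \<ge> 1\<close> by (simp_all add: x_def y_def num_finite_probe plus_eq_infty_iff_enat)
  moreover have "x z\<^sub>1 \<noteq> y z\<^sub>1"
    using z \<open>z\<^sub>1 \<noteq> z\<^sub>2\<close> finite_z by (simp add: x_def y_def probe_def plus_eq_infty_iff_enat)
  ultimately obtain t' where t': "t' < T" and differ: "trop_mv S N x t' \<noteq> trop_mv S N y t'"
    using tropical_codeD[OF code _ _ \<open>z\<^sub>1 < N\<close>] by blast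
  show False
  proof (cases "t' = t")
    case True
    have "t \<notin> (\<Union>i\<in>I. block T S i)"
      using private1 by blast
    then have "\<forall>i\<in>I. S t i = \<infinity>"
      using \<open>t < T\<close> by (auto simp: block_def)
    then have "(INF i\<in>I. S t i) = \<infinity>"
      by (metis INF_top_conv(1) top_enat_def)
    then have "trop_mv S N x t = trop_mv S N y t"
      using I z by (simp add: x_def y_def trop_mv_probe ac_simps)
    with differ True show False
      by simp
  next
    case False
    have bound: "\<forall>i\<in>I. S t' i \<noteq> \<infinity> \<longrightarrow> S t' i \<le> enat M"
      using M t' by blast
    have M_le: "enat M \<le> enat M + c" for c
      by (metis le_iff_add)
    have "trop_mv S N x t' = (INF i\<in>I. S t' i)"
      unfolding x_def using private1 False
      by (intro trop_mv_probe_eq_INF[where S = S and T = T, OF I(1) z(1,3) t' _ bound M_le]) blast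
    moreover have "trop_mv S N y t' = (INF i\<in>I. S t' i)"
      unfolding y_def using private2 False
      by (intro trop_mv_probe_eq_INF[where S = S and T = T, OF I(1) z(2,4) t' _ bound M_le]) blast
    ultimately show False
      using differ by simp
  qed
qed

theorem mainTheorem10:
  fixes T N D :: nat and S :: "nat \<Rightarrow> nat \<Rightarrow> enat"
  assumes "D \<ge> 1" and "tropical_code T N D S"
  shows "uniquely_disjunct T N S (D - 1)"
  unfolding uniquely_disjunct_def
proof (intro conjI allI impI)
  show "disjunct T N S (D - 1)"
    using assms by (rule tropical_code_disjunct)
  fix t I z\<^sub>1 z\<^sub>2
  assume "t < T" "I \<subseteq> {..<N}" "card I = D - 1" "z\<^sub>1 < N" "z\<^sub>2 < N" "z\<^sub>1 \<notin> I" "z\<^sub>2 \<notin> I"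
    "block T S z\<^sub>1 - (\<Union>i\<in>I. block T S i) = {t}" "block T S z\<^sub>2 - (\<Union>i\<in>I. block T S i) = {t}"
  with assms show "z\<^sub>1 = z\<^sub>2"
    by (rule tropical_code_private_row_unique)
qed

end
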